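(* Let $X$ and $Y$ be metrizable spaces that are locally compact and $\sigma$-compact, let $G$ be a group, and let $\varphi\colon G\times X\to X$ and $\psi\colon G\times Y\to Y$ be metric-independent expansive (MIE) actions. Then the coproduct action of $G$ on the disjoint union $X\sqcup Y$ (acting by $\varphi$ on $X$ and by $\psi$ on $Y$) is MIE.
   Context: For a metric $d$ on a space $Z$, an action of $G$ on $Z$ is expansive with respect to $d$ if there is $c>0$ such that for all $x\neq y$ in $Z$ there is $g\in G$ with $d(g\cdot x,g\cdot y)>c$. The action is metric-independent expansive (MIE) if it is expansive with respect to every metric compatible with the topology of $Z$. *)

theory Defs
  imports "HOL-Analysis.Analysis" "HOL-Algebra.Group_Action"
begin

definition sigma_compact_space :: "'a topology \<Rightarrow> bool" where
  "sigma_compact_space X \<longleftrightarrow>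
     (\<exists>\<K>. countable \<K> \<and> (\<forall>K\<in>\<K>. compactin X K) \<and> \<Union>\<K> = topspace X)"

definition compatible_metric :: "'a topology \<Rightarrow> ('a \<Rightarrow> 'a \<Rightarrow> real) \<Rightarrow> bool" where
  "compatible_metric Z d \<longleftrightarrow>
     Metric_space (topspace Z) d \<and> Metric_space.mtopology (topspace Z) d = Z"

definition expansive_wrt ::
  "('g, 'm) monoid_scheme \<Rightarrow> 'a topology \<Rightarrow> ('g \<Rightarrow> 'a \<Rightarrow> 'a) \<Rightarrow> ('a \<Rightarrow> 'a \<Rightarrow> real) \<Rightarrow> bool" where
  "expansive_wrt G Z \<phi> d \<longleftrightarrow>
     (\<exists>c>0. \<forall>x\<in>topspace Z. \<forall>y\<in>topspace Z. x \<noteq> y \<longrightarrow>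
        (\<exists>g\<in>carrier G. d (\<phi> g x) (\<phi> g y) > c))"

definition MIE ::
  "('g, 'm) monoid_scheme \<Rightarrow> 'a topology \<Rightarrow> ('g \<Rightarrow> 'a \<Rightarrow> 'a) \<Rightarrow> bool" where
  "MIE G Z \<phi> \<longleftrightarrow> (\<forall>d. compatible_metric Z d \<longrightarrow> expansive_wrt G Z \<phi> d)"

definition continuous_action ::
  "('g, 'm) monoid_scheme \<Rightarrow> 'a topology \<Rightarrow> ('g \<Rightarrow> 'a \<Rightarrow> 'a) \<Rightarrow> bool" where
  "continuous_action G X \<phi> \<longleftrightarrow>
     group_action G (topspace X) \<phi> \<and> (\<forall>g\<in>carrier G. continuous_map X X (\<phi> g))"

definition disjoint_union_topology :: "'a topology \<Rightarrow> 'b topology \<Rightarrow> ('a + 'b) topology" where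
  "disjoint_union_topology X Y = topology (\<lambda>U.
      U \<subseteq> Inl ` topspace X \<union> Inr ` topspace Y \<and> openin X (Inl -` U) \<and> openin Y (Inr -` U))"

definition coproduct_action ::
  "('g \<Rightarrow> 'a \<Rightarrow> 'a) \<Rightarrow> ('g \<Rightarrow> 'b \<Rightarrow> 'b) \<Rightarrow> 'g \<Rightarrow> 'a + 'b \<Rightarrow> 'a + 'b" where
  "coproduct_action \<phi> \<psi> g z = (case z of Inl x \<Rightarrow> Inl (\<phi> g x) | Inr y \<Rightarrow> Inr (\<psi> g y))"

end

theory Submission
  imports Defs
begin

(* Restricting a compatible metric d on X + Y to the summands gives compatible metrics on X and Y,
   so expansiveness separates pairs of points lying in the same summand. For a mixed pair (x, y),
   let r x be the distance from Inl x to the Y-part (capped at 1): it is positive because the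
   X-part is open, and 1-Lipschitz, so min (d x x') (r x + r x') is again a compatible metric on X,
   with some expansive constant c. If orbits of mixed pairs were not uniformly separated, there would
   be mixed pairs (x1, y1), (x2, y2) whose orbits stay within c/4 and within r x1 / 2, respectively;
   then x1 \<noteq> x2, but g x1 and g x2 are both within c/4 of the Y-part for every g, so their modified
   distance is at most c/2, contradicting expansiveness. *)

lemma istopology_disjoint_union:
  "istopology (\<lambda>U. U \<subseteq> Inl ` topspace X \<union> Inr ` topspace Y \<and> openin X (Inl -` U) \<and> openin Y (Inr -` U))"
  by (auto simp: istopology_def vimage_Union)

lemma openin_disjoint_union_topology:
  "openin (disjoint_union_topology X Y) U \<longleftrightarrow>
     U \<subseteq> Inl ` topspace X \<union> Inr ` topspace Y \<and> openin X (Inl -` U) \<and> openin Y (Inr -` U)"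
  unfolding disjoint_union_topology_def
  using istopology_disjoint_union[of X Y] by simp

lemma vimage_Inl_Inr_image [simp]:
  "Inl -` Inl ` A = A" "Inl -` Inr ` B = {}" "Inr -` Inr ` B = B" "Inr -` Inl ` A = {}"
  by auto

lemma topspace_disjoint_union_topology:
  "topspace (disjoint_union_topology X Y) = Inl ` topspace X \<union> Inr ` topspace Y"
proof -
  have "openin (disjoint_union_topology X Y) (Inl ` topspace X \<union> Inr ` topspace Y)"
    by (simp add: openin_disjoint_union_topology)
  then show ?thesis
    by (metis openin_disjoint_union_topology openin_subset openin_topspace subset_antisym)
qed

lemma embedding_map_Inl: "embedding_map X (disjoint_union_topology X Y) Inl"
proof (rule injective_open_imp_embedding_map)
  have "{x \<in> topspace X. Inl x \<in> U} = Inl -` U" if "openin X (Inl -` U)" for U :: "('a + 'b) set"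
    using openin_subset[OF that] by auto
  then show "continuous_map X (disjoint_union_topology X Y) Inl"
    by (auto simp: continuous_map_def topspace_disjoint_union_topology openin_disjoint_union_topology)
  show "open_map X (disjoint_union_topology X Y) Inl"
    by (auto simp: open_map_def openin_disjoint_union_topology dest: openin_subset)
qed simp

lemma embedding_map_Inr:
  fixes X :: "'a topology" and Y :: "'b topology"
  shows "embedding_map Y (disjoint_union_topology X Y) Inr"
proof (rule injective_open_imp_embedding_map)
  have "{y \<in> topspace Y. Inr y \<in> U} = Inr -` U" if "openin Y (Inr -` U)" for U :: "('a + 'b) set"
    using openin_subset[OF that] by auto
  then show "continuous_map Y (disjoint_union_topology X Y) Inr"
    by (auto simp: continuous_map_def topspace_disjoint_union_topology openin_disjoint_union_topology)
  show "open_map Y (disjoint_union_topology X Y) Inr"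
    by (auto simp: open_map_def openin_disjoint_union_topology dest: openin_subset)
qed simp

lemma embedding_map_eq_topology:
  assumes "embedding_map X Z f" "embedding_map X' Z f" "topspace X = topspace X'"
  shows "X = X'"
  using assms unfolding embedding_map_def topology_eq
  by (metis homeomorphic_map_openness_eq)

lemma compatible_metric_pullback:
  assumes d: "compatible_metric Z d" and f: "embedding_map X Z f"
  shows "compatible_metric X (\<lambda>a b. d (f a) (f b))"
proof -
  interpret Z: Metric_space "topspace Z" d
    using d by (simp add: compatible_metric_def)
  have "inj_on f (topspace X)"
    using f by (simp add: embedding_map_def homeomorphic_map_def)
  moreover have "f \<in> topspace X \<rightarrow> topspace Z"
    using f homeomorphic_imp_continuous_map continuous_map_funspace
    by (fastforce simp: embedding_map_def continuous_map_in_subtopology)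
  ultimately interpret Metric_space12 "topspace X" "\<lambda>a b. d (f a) (f b)" "topspace Z" d
    by unfold_locales (auto simp: Z.commute Z.triangle inj_on_eq_iff Pi_iff)
  have "embedding_map M1.mtopology Z f"
    using isometry_imp_embedding_map \<open>f \<in> _ \<rightarrow> _\<close> d by (simp add: compatible_metric_def)
  then have "M1.mtopology = X"
    using f by (intro embedding_map_eq_topology) auto
  then show ?thesis
    by (simp add: compatible_metric_def M1.Metric_space_axioms)
qed

lemma (in Metric_space) mtopology_eq_if_locally_eq:
  assumes "Metric_space M \<rho>" and le: "\<And>a b. \<rho> a b \<le> d a b"
    and loc: "\<And>a. a \<in> M \<Longrightarrow> \<exists>\<epsilon>>0. \<forall>b\<in>M. \<rho> a b < \<epsilon> \<longrightarrow> d a b = \<rho> a b"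
  shows "Metric_space.mtopology M \<rho> = mtopology"
proof -
  interpret R: Metric_space M \<rho> by fact
  have "(\<exists>s>0. R.mball a s \<subseteq> U) \<longleftrightarrow> (\<exists>s>0. mball a s \<subseteq> U)" if "a \<in> M" for a U
  proof
    assume "\<exists>s>0. R.mball a s \<subseteq> U"
    moreover have "mball a s \<subseteq> R.mball a s" for s
      by (auto intro: le_less_trans[OF le])
    ultimately show "\<exists>s>0. mball a s \<subseteq> U"
      by blast
  next
    assume "\<exists>s>0. mball a s \<subseteq> U"
    then obtain s where "s > 0" "mball a s \<subseteq> U"
      by blast
    moreover obtain \<epsilon> where "\<epsilon> > 0" "\<forall>b\<in>M. \<rho> a b < \<epsilon> \<longrightarrow> d a b = \<rho> a b"
      using loc \<open>a \<in> M\<close> by blast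
    ultimately have "R.mball a (min s \<epsilon>) \<subseteq> U"
      by force
    then show "\<exists>s>0. R.mball a s \<subseteq> U"
      using \<open>s > 0\<close> \<open>\<epsilon> > 0\<close> by (intro exI[of _ "min s \<epsilon>"]) auto
  qed
  then show ?thesis
    unfolding topology_eq openin_mtopology R.openin_mtopology by blast
qed

(* The absolute values matter only outside topspace X, where Metric_space still demands
   nonnegativity. *)
lemma compatible_metric_min_radii:
  assumes d: "compatible_metric X d"
    and r_pos: "\<And>a. a \<in> topspace X \<Longrightarrow> 0 < r a"
    and r_lip: "\<And>a b. a \<in> topspace X \<Longrightarrow> b \<in> topspace X \<Longrightarrow> r a \<le> r b + d a b"
  shows "compatible_metric X (\<lambda>a b. min (d a b) (\<bar>r a\<bar> + \<bar>r b\<bar>))"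
proof -
  interpret Metric_space "topspace X" d
    using d by (simp add: compatible_metric_def)
  define \<rho> where "\<rho> a b = min (d a b) (\<bar>r a\<bar> + \<bar>r b\<bar>)" for a b
  have abs_r: "\<bar>r a\<bar> = r a" if "a \<in> topspace X" for a
    using r_pos[OF that] by simp
  have \<rho>: "Metric_space (topspace X) \<rho>"
  proof
    show "0 \<le> \<rho> a b" for a b
      by (simp add: \<rho>_def)
    show "\<rho> a b = \<rho> b a" for a b
      by (simp add: \<rho>_def commute add.commute)
    show "\<rho> a b = 0 \<longleftrightarrow> a = b" if "a \<in> topspace X" "b \<in> topspace X" for a b
      using zero[OF that] r_pos[OF that(1)] r_pos[OF that(2)] by (auto simp: \<rho>_def abs_r that min_def)
    show "\<rho> a c \<le> \<rho> a b + \<rho> b c" if abc: "a \<in> topspace X" "b \<in> topspace X" "c \<in> topspace X" for a b c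
    proof -
      have "d a c \<le> d a b + d b c" "r a \<le> r b + d a b" "r c \<le> r b + d b c" "0 < r b"
        using triangle[OF abc] r_lip[of a b] r_lip[of c b] commute[of b c] r_pos abc by auto
      then show ?thesis
        by (auto simp: \<rho>_def abs_r abc min_def)
    qed
  qed
  moreover have "\<exists>\<epsilon>>0. \<forall>b\<in>topspace X. \<rho> a b < \<epsilon> \<longrightarrow> d a b = \<rho> a b" if "a \<in> topspace X" for a
    using r_pos[OF that] by (intro exI[of _ "r a"]) (auto simp: \<rho>_def min_def)
  ultimately have "Metric_space.mtopology (topspace X) \<rho> = X"
    using d mtopology_eq_if_locally_eq by (simp add: \<rho>_def compatible_metric_def)
  then show ?thesis
    using \<rho> by (simp add: compatible_metric_def \<rho>_def[abs_def])
qed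

lemma (in Metric_space) openin_obtains_margin:
  assumes "openin mtopology A"
  obtains r where "\<And>a. a \<in> A \<Longrightarrow> 0 < r a"
    and "\<And>a b. b \<in> M - A \<Longrightarrow> r a \<le> d a b"
    and "\<And>a a'. a \<in> M \<Longrightarrow> a' \<in> M \<Longrightarrow> r a \<le> r a' + d a a'"
proof -
  \<comment> \<open>The cap 1 avoids the junk value of \<open>Inf {}\<close> when \<open>A = M\<close>.\<close>
  define r where "r a = Inf (insert 1 (d a ` (M - A)))" for a
  have bdd: "bdd_below (insert 1 (d a ` (M - A)))" for a
    by (rule bdd_belowI[of _ 0]) auto
  have r_le_1: "r a \<le> 1" for a
    unfolding r_def using bdd by (rule cInf_lower[rotated]) simp
  have r_le: "r a \<le> d a b" if "b \<in> M - A" for a b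
    unfolding r_def using bdd that by (intro cInf_lower) auto
  have r_pos: "0 < r a" if "a \<in> A" for a
  proof -
    obtain e where "e > 0" and e: "mball a e \<subseteq> A"
      using assms \<open>a \<in> A\<close> by (auto simp: openin_mtopology)
    have "a \<in> M"
      using openin_subset[OF assms] \<open>a \<in> A\<close> by auto
    have e_le: "e \<le> d a b" if "b \<in> M - A" for b
    proof (rule ccontr)
      assume "\<not> e \<le> d a b"
      then have "b \<in> mball a e"
        using that \<open>a \<in> M\<close> by auto
      then show False
        using e that by blast
    qed
    then have "min 1 e \<le> r a"
      unfolding r_def by (intro cInf_greatest) (auto intro: min.coboundedI2 e_le)
    then show ?thesis
      using \<open>e > 0\<close> by linarith
  qed
  have r_lip: "r a \<le> r a' + d a a'" if "a \<in> M" "a' \<in> M" for a a'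
  proof -
    have "r a - d a a' \<le> t" if "t \<in> insert 1 (d a' ` (M - A))" for t
      using that
    proof
      assume "t = 1"
      then show ?thesis
        using r_le_1[of a] nonneg[of a a'] by linarith
    next
      assume "t \<in> d a' ` (M - A)"
      then obtain b where b: "b \<in> M - A" "t = d a' b"
        by blast
      have "r a \<le> d a b" "d a b \<le> d a a' + d a' b"
        using r_le[OF b(1)] triangle[of a a' b] b \<open>a \<in> M\<close> \<open>a' \<in> M\<close> by auto
      then show ?thesis
        using b(2) by linarith
    qed
    then have "r a - d a a' \<le> r a'"
      unfolding r_def[of a'] by (intro cInf_greatest) auto
    then show ?thesis
      by linarith
  qed
  show thesis
    using r_pos r_le r_lip by (rule that)
qed

lemma mixed_orbits_separated:
  assumes "group_action G (topspace X) \<phi>" "group_action G (topspace Y) \<psi>"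
    and "expansive_wrt G X \<phi> \<rho>"
    and \<rho>_le: "\<And>a b. a \<in> topspace X \<Longrightarrow> b \<in> topspace X \<Longrightarrow> \<rho> a b \<le> r a + r b"
    and r_pos: "\<And>a. a \<in> topspace X \<Longrightarrow> 0 < r a"
    and r_le: "\<And>a b. a \<in> topspace X \<Longrightarrow> b \<in> topspace Y \<Longrightarrow> r a \<le> \<delta> a b"
  shows "\<exists>c>0. \<forall>x\<in>topspace X. \<forall>y\<in>topspace Y. \<exists>g\<in>carrier G. c < \<delta> (\<phi> g x) (\<psi> g y)"
proof (rule ccontr)
  interpret X: group_action G "topspace X" \<phi> by fact
  interpret Y: group_action G "topspace Y" \<psi> by fact
  obtain c where "c > 0" and c_exp: "\<And>x x'. \<lbrakk>x \<in> topspace X; x' \<in> topspace X; x \<noteq> x'\<rbrakk>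
      \<Longrightarrow> \<exists>g\<in>carrier G. c < \<rho> (\<phi> g x) (\<phi> g x')"
    using \<open>expansive_wrt G X \<phi> \<rho>\<close> unfolding expansive_wrt_def by blast
  assume "\<not> ?thesis"
  then have close: "\<exists>x\<in>topspace X. \<exists>y\<in>topspace Y. \<forall>g\<in>carrier G. \<delta> (\<phi> g x) (\<psi> g y) \<le> \<epsilon>"
    if "\<epsilon> > 0" for \<epsilon>
    using that by (auto simp: not_less dest: spec[of _ \<epsilon>])
  have one: "\<one>\<^bsub>G\<^esub> \<in> carrier G"
    using group_hom.axioms(1)[OF X.group_hom] by (simp add: group.is_monoid)
  have r_le_close: "r x \<le> \<epsilon>"
    if "x \<in> topspace X" "y \<in> topspace Y" "\<forall>g\<in>carrier G. \<delta> (\<phi> g x) (\<psi> g y) \<le> \<epsilon>" for x y \<epsilon>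
  proof -
    have "\<phi> \<one>\<^bsub>G\<^esub> x = x" "\<psi> \<one>\<^bsub>G\<^esub> y = y"
      using X.id_eq_one Y.id_eq_one that(1,2) by (metis restrict_apply')+
    then have "\<delta> x y \<le> \<epsilon>"
      using bspec[OF that(3) one] by simp
    then show ?thesis
      using r_le[OF that(1,2)] by linarith
  qed
  obtain x1 y1 where xy1: "x1 \<in> topspace X" "y1 \<in> topspace Y"
      "\<forall>g\<in>carrier G. \<delta> (\<phi> g x1) (\<psi> g y1) \<le> c / 4"
    using close[of "c / 4"] \<open>c > 0\<close> by auto
  obtain x2 y2 where xy2: "x2 \<in> topspace X" "y2 \<in> topspace Y"
      "\<forall>g\<in>carrier G. \<delta> (\<phi> g x2) (\<psi> g y2) \<le> min (c / 4) (r x1 / 2)"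
    using close[of "min (c / 4) (r x1 / 2)"] \<open>c > 0\<close> r_pos[OF xy1(1)] by auto
  have "r x2 < r x1"
    using r_le_close[OF xy2] r_pos[OF xy1(1)] by linarith
  then obtain g where g: "g \<in> carrier G" "c < \<rho> (\<phi> g x1) (\<phi> g x2)"
    using c_exp[OF xy1(1) xy2(1)] by blast
  have gx: "\<phi> g x1 \<in> topspace X" "\<phi> g x2 \<in> topspace X"
    using X.element_image g(1) xy1(1) xy2(1) by blast+
  have gy: "\<psi> g y1 \<in> topspace Y" "\<psi> g y2 \<in> topspace Y"
    using Y.element_image g(1) xy1(2) xy2(2) by blast+
  have "\<rho> (\<phi> g x1) (\<phi> g x2) \<le> r (\<phi> g x1) + r (\<phi> g x2)"
    using \<rho>_le gx by blast
  also have "\<dots> \<le> \<delta> (\<phi> g x1) (\<psi> g y1) + \<delta> (\<phi> g x2) (\<psi> g y2)"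
    using r_le gx gy by (intro add_mono)
  also have "\<dots> \<le> c / 4 + c / 4"
    using xy1(3) xy2(3) g(1) by (intro add_mono) auto
  finally show False
    using g(2) \<open>c > 0\<close> by linarith
qed

lemma expansive_coproduct_action:
  assumes "expansive_wrt G X \<phi> (\<lambda>a b. d (Inl a) (Inl b))"
    and "expansive_wrt G Y \<psi> (\<lambda>a b. d (Inr a) (Inr b))"
    and "\<exists>c>0. \<forall>x\<in>topspace X. \<forall>y\<in>topspace Y. \<exists>g\<in>carrier G. c < d (Inl (\<phi> g x)) (Inr (\<psi> g y))"
    and d_commute: "\<And>u v. d u v = d v u"
  shows "expansive_wrt G (disjoint_union_topology X Y) (coproduct_action \<phi> \<psi>) d"
proof -
  obtain cX where "cX > 0" and cX: "\<And>x x'. \<lbrakk>x \<in> topspace X; x' \<in> topspace X; x \<noteq> x'\<rbrakk>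
      \<Longrightarrow> \<exists>g\<in>carrier G. cX < d (Inl (\<phi> g x)) (Inl (\<phi> g x'))"
    using assms(1) unfolding expansive_wrt_def by blast
  obtain cY where "cY > 0" and cY: "\<And>y y'. \<lbrakk>y \<in> topspace Y; y' \<in> topspace Y; y \<noteq> y'\<rbrakk>
      \<Longrightarrow> \<exists>g\<in>carrier G. cY < d (Inr (\<psi> g y)) (Inr (\<psi> g y'))"
    using assms(2) unfolding expansive_wrt_def by blast
  obtain cM where "cM > 0" and cM: "\<And>x y. \<lbrakk>x \<in> topspace X; y \<in> topspace Y\<rbrakk>
      \<Longrightarrow> \<exists>g\<in>carrier G. cM < d (Inl (\<phi> g x)) (Inr (\<psi> g y))"
    using assms(3) by blast
  define c where "c = min cX (min cY cM)"
  have "\<exists>g\<in>carrier G. c < d (coproduct_action \<phi> \<psi> g z) (coproduct_action \<phi> \<psi> g w)"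
    if zw: "z \<in> topspace (disjoint_union_topology X Y)" "w \<in> topspace (disjoint_union_topology X Y)"
      and "z \<noteq> w" for z w
  proof -
    consider (XX) x x' where "z = Inl x" "w = Inl x'" "x \<in> topspace X" "x' \<in> topspace X"
      | (XY) x y where "z = Inl x" "w = Inr y" "x \<in> topspace X" "y \<in> topspace Y"
      | (YX) y x where "z = Inr y" "w = Inl x" "x \<in> topspace X" "y \<in> topspace Y"
      | (YY) y y' where "z = Inr y" "w = Inr y'" "y \<in> topspace Y" "y' \<in> topspace Y"
      using zw unfolding topspace_disjoint_union_topology by blast
    then show ?thesis
    proof cases
      case XX
      then show ?thesis
        using cX[of x x'] \<open>z \<noteq> w\<close> by (force simp: c_def coproduct_action_def)
    next
      case XY
      then show ?thesis
        using cM[of x y] by (force simp: c_def coproduct_action_def)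
    next
      case YX
      then show ?thesis
        using cM[of x y] d_commute by (force simp: c_def coproduct_action_def)
    next
      case YY
      then show ?thesis
        using cY[of y y'] \<open>z \<noteq> w\<close> by (force simp: c_def coproduct_action_def)
    qed
  qed
  moreover have "c > 0"
    using \<open>cX > 0\<close> \<open>cY > 0\<close> \<open>cM > 0\<close> by (simp add: c_def)
  ultimately show ?thesis
    unfolding expansive_wrt_def by blast
qed

lemma MIE_coproduct_action:
  assumes "group_action G (topspace X) \<phi>" "group_action G (topspace Y) \<psi>"
    and "MIE G X \<phi>" "MIE G Y \<psi>"
  shows "MIE G (disjoint_union_topology X Y) (coproduct_action \<phi> \<psi>)"
  unfolding MIE_def
proof (intro allI impI)
  let ?Z = "disjoint_union_topology X Y"
  fix d assume d: "compatible_metric ?Z d"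
  interpret Metric_space "topspace ?Z" d
    using d by (simp add: compatible_metric_def)
  have dX: "compatible_metric X (\<lambda>a b. d (Inl a) (Inl b))"
    using d embedding_map_Inl by (rule compatible_metric_pullback)
  have dY: "compatible_metric Y (\<lambda>a b. d (Inr a) (Inr b))"
    using d embedding_map_Inr by (rule compatible_metric_pullback)
  have "openin mtopology (Inl ` topspace X)"
    using d by (simp add: compatible_metric_def openin_disjoint_union_topology)
  then obtain r where r_pos: "\<And>a. a \<in> Inl ` topspace X \<Longrightarrow> 0 < r a"
    and r_le: "\<And>a b. b \<in> topspace ?Z - Inl ` topspace X \<Longrightarrow> r a \<le> d a b"
    and r_lip: "\<And>a a'. a \<in> topspace ?Z \<Longrightarrow> a' \<in> topspace ?Z \<Longrightarrow> r a \<le> r a' + d a a'"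
    by (rule openin_obtains_margin) blast
  have r_pos_X: "0 < r (Inl a)" if "a \<in> topspace X" for a
    using r_pos that by blast
  have r_le_XY: "r (Inl a) \<le> d (Inl a) (Inr b)" if "b \<in> topspace Y" for a b
    using r_le that by (auto simp: topspace_disjoint_union_topology)
  define \<rho> where "\<rho> a b = min (d (Inl a) (Inl b)) (\<bar>r (Inl a)\<bar> + \<bar>r (Inl b)\<bar>)" for a b
  have "compatible_metric X \<rho>"
    unfolding \<rho>_def using dX r_pos_X r_lip
    by (intro compatible_metric_min_radii) (auto simp: topspace_disjoint_union_topology)
  then have "expansive_wrt G X \<phi> \<rho>"
    using \<open>MIE G X \<phi>\<close> by (simp add: MIE_def)
  moreover have "\<rho> a b \<le> r (Inl a) + r (Inl b)" if "a \<in> topspace X" "b \<in> topspace X" for a b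
    using r_pos_X[OF that(1)] r_pos_X[OF that(2)] by (simp add: \<rho>_def)
  ultimately have "\<exists>c>0. \<forall>x\<in>topspace X. \<forall>y\<in>topspace Y. \<exists>g\<in>carrier G. c < d (Inl (\<phi> g x)) (Inr (\<psi> g y))"
    using assms(1,2) r_pos_X r_le_XY by (intro mixed_orbits_separated[where r = "\<lambda>a. r (Inl a)"])
  then show "expansive_wrt G ?Z (coproduct_action \<phi> \<psi>) d"
    using \<open>MIE G X \<phi>\<close> \<open>MIE G Y \<psi>\<close> dX dY commute
    by (intro expansive_coproduct_action) (simp_all add: MIE_def)
qed

theorem mainTheorem7:
  fixes G :: "('g, 'm) monoid_scheme"
    and X :: "'a topology" and Y :: "'b topology"
    and \<phi> :: "'g \<Rightarrow> 'a \<Rightarrow> 'a" and \<psi> :: "'g \<Rightarrow> 'b \<Rightarrow> 'b"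
  assumes "metrizable_space X" "locally_compact_space X" "sigma_compact_space X"
    and "metrizable_space Y" "locally_compact_space Y" "sigma_compact_space Y"
    and "group G"
    and "continuous_action G X \<phi>" "continuous_action G Y \<psi>"
    and "MIE G X \<phi>" "MIE G Y \<psi>"
  shows "MIE G (disjoint_union_topology X Y) (coproduct_action \<phi> \<psi>)"
proof -
  have "group_action G (topspace X) \<phi>" "group_action G (topspace Y) \<psi>"
    using assms(8,9) by (simp_all add: continuous_action_def)
  then show ?thesis
    using assms(10,11) by (rule MIE_coproduct_action)
qed

end
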